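(* Let $\mathcal{D}$ be a derivation in one of the proof systems $\mathbf{Reg}$, $\mathbf{Reg}^{+}$ or $\mathbf{Reg}^{+}_{0}$, possibly with open marked assumptions. Then for every instance $\iota$ of the rule (FIX) in $\mathcal{D}$ the following holds: every thread in $\mathcal{D}$ from the conclusion of $\iota$ upwards to a marked assumption that is discharged at $\iota$ passes at least one instance of the rule $(\lambda)$ or of the rule $(@)$.
   Context: Infinite $\lambda$-terms are possibly infinite terms built from variables, abstractions $\lambda y.M$ and applications $M\,N$, considered modulo $\alpha$-equivalence. A prefixed term is an expression $\lambda x_1\ldots x_n.M$ ($n\ge 0$, distinct variables, written as a separate abstraction prefix; $\lambda.M$ for the empty prefix) where $M$ is an infinite $\lambda$-term whose free variables are among $x_1,\dots,x_n$. Derivations are finite natural-deduction style proof trees whose formulas are prefixed terms; a thread is a path in the tree. The system $\mathbf{Reg}^{+}$ has: axiom (nlvar) $\lambda\vec{x}y.y$; rule $(\lambda)$: from $\lambda\vec{x}y.M_0$ infer $\lambda\vec{x}.\lambda y.M_0$; rule $(@)$: from $\lambda\vec{x}.M_0$ and $\lambda\vec{x}.M_1$ infer $\lambda\vec{x}.(M_0\,M_1)$; rule $(\mathrm{del}^{+})$: from $\lambda x_1\ldots x_{n-1}.M$ infer $\lambda x_1\ldots x_n.M$, provided $x_n$ does not occur free in $M$; rule (FIX,$u$): if $\mathcal{D}_0$ is a derivation of $\lambda\vec{x}.M$ that may contain open assumption leaves $[\lambda\vec{x}.M]^u$ marked with $u$, infer $\lambda\vec{x}.M$, discharging these assumptions,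 provided $\mathcal{D}_0$ has depth $\ge 1$ (contains at least one rule instance). The system $\mathbf{Reg}^{+}_0$ has the same axioms and rules, but every instance of (FIX,$u$) must additionally satisfy: every prefixed term $\lambda\vec{y}.N$ occurring on a thread in $\mathcal{D}_0$ from an open marked assumption $(\lambda\vec{x}.M)^u$ downwards has $|\vec{y}|\ge|\vec{x}|$. The system $\mathbf{Reg}$ differs from $\mathbf{Reg}^{+}$ in that the axiom is restricted to $\lambda y.y$ (one-variable prefix) and the rule $(\mathrm{del}^{+})$ is replaced by $(\mathrm{del})$: from $\lambda x_1\ldots x_{i-1}x_{i+1}\ldots x_n.M$ infer $\lambda x_1\ldots x_n.M$, provided $x_i$ does not occur free in $M$. *)

theory Defs
  imports "HOL-Library.Sublist"
begin

(* Possibly infinite lambda-terms; alpha-equivalence classes are represented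
   by de Bruijn terms, so alpha-equivalence becomes equality. *)
codatatype trm = Var nat | Abs trm | App trm trm

(* index i occurs free (loose) in a term; occurrences are at finite depth *)
inductive loose :: "nat \<Rightarrow> trm \<Rightarrow> bool" where
  "loose i (Var i)"
| "loose (Suc i) t \<Longrightarrow> loose i (Abs t)"
| "loose i s \<Longrightarrow> loose i (App s t)"
| "loose i t \<Longrightarrow> loose i (App s t)"

(* prefixed term  \<lambda>x_1..x_n.M  is represented by (n, M); variable x_j is
   de Bruijn index n - j *)
type_synonym ptrm = "nat \<times> trm"

definition wf_ptrm :: "ptrm \<Rightarrow> bool" where
  "wf_ptrm P \<longleftrightarrow> (\<forall>i. loose i (snd P) \<longrightarrow> i < fst P)"

(* shift all free indices \<ge> c by one (insertion of a fresh prefix variable) *)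
primcorec shift :: "nat \<Rightarrow> trm \<Rightarrow> trm" where
  "shift c t = (case t of
      Var i \<Rightarrow> Var (if c \<le> i then Suc i else i)
    | Abs s \<Rightarrow> Abs (shift (Suc c) s)
    | App a b \<Rightarrow> App (shift c a) (shift c b))"

datatype rule = Assm nat | Ax | Lam | Ap | Del | Fix nat

datatype deriv = Node rule ptrm "deriv list"

fun rule_of :: "deriv \<Rightarrow> rule" where "rule_of (Node r _ _) = r"
fun concl :: "deriv \<Rightarrow> ptrm" where "concl (Node _ P _) = P"
fun prems :: "deriv \<Rightarrow> deriv list" where "prems (Node _ _ ds) = ds"

(* subderivation at a position (path of premise indices from the root) *)
fun at :: "deriv \<Rightarrow> nat list \<Rightarrow> deriv option" where
  "at d [] = Some d"
| "at (Node r P ds) (i # p) = (if i < length ds then at (ds ! i) p else None)"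

datatype sys = Reg | RegP | RegP0

fun local_ok :: "sys \<Rightarrow> rule \<Rightarrow> ptrm \<Rightarrow> ptrm list \<Rightarrow> bool" where
  "local_ok S (Assm u) P Ps \<longleftrightarrow> Ps = []"
| "local_ok S Ax P Ps \<longleftrightarrow> Ps = [] \<and>
     (if S = Reg then P = (1, Var 0) else (\<exists>n. P = (Suc n, Var 0)))"
| "local_ok S Lam P Ps \<longleftrightarrow> (\<exists>n M. Ps = [(Suc n, M)] \<and> P = (n, Abs M))"
| "local_ok S Ap P Ps \<longleftrightarrow> (\<exists>n M0 M1. Ps = [(n, M0), (n, M1)] \<and> P = (n, App M0 M1))"
| "local_ok S Del P Ps \<longleftrightarrow> (\<exists>n M c. Ps = [(n, M)] \<and> P = (Suc n, shift c M) \<and>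
     (if S = Reg then c \<le> n else c = 0))"
| "local_ok S (Fix u) P Ps \<longleftrightarrow> Ps = [P]"

(* the marked assumption leaf at position p is discharged by the (FIX,u)
   instance at position q: q is strictly below p on the same branch and
   no (FIX,u) lies strictly between them *)
definition discharged_at :: "deriv \<Rightarrow> nat list \<Rightarrow> nat list \<Rightarrow> bool" where
  "discharged_at D q p \<longleftrightarrow> (\<exists>u d e.
      at D q = Some d \<and> rule_of d = Fix u \<and>
      at D p = Some e \<and> rule_of e = Assm u \<and> strict_prefix q p \<and>
      (\<forall>r f. strict_prefix q r \<and> strict_prefix r p \<and> at D r = Some f \<longrightarrow>
             rule_of f \<noteq> Fix u))"

definition fix_ok :: "sys \<Rightarrow> deriv \<Rightarrow> nat list \<Rightarrow> bool" where
  "fix_ok S D q \<longleftrightarrow> (\<forall>d u. at D q = Some d \<and> rule_of d = Fix u \<longrightarrow>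
      \<comment> \<open>D_0 has depth at least 1\<close>
      prems (hd (prems d)) \<noteq> [] \<and>
      \<comment> \<open>the discharged assumptions are exactly the conclusion formula\<close>
      (\<forall>p e. discharged_at D q p \<and> at D p = Some e \<longrightarrow> concl e = concl d) \<and>
      \<comment> \<open>extra condition of Reg+_0 on threads from discharged assumptions down to D_0's root\<close>
      (S = RegP0 \<longrightarrow> (\<forall>p r f. discharged_at D q p \<and> strict_prefix q r \<and> prefix r p
            \<and> at D r = Some f \<longrightarrow> fst (concl f) \<ge> fst (concl d))))"

definition valid :: "sys \<Rightarrow> deriv \<Rightarrow> bool" where
  "valid S D \<longleftrightarrow> (\<forall>p d. at D p = Some d \<longrightarrow>
      wf_ptrm (concl d) \<and> local_ok S (rule_of d) (concl d) (map concl (prems d)) \<and>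
      fix_ok S D p)"

end

theory Submission
  imports Defs
begin

text \<open>Reading a thread upwards, only the rules (\<open>\<lambda>\<close>) and (\<open>@\<close>) can enlarge the
  abstraction prefix: (del) shrinks it and (FIX) keeps it. On a thread from a (FIX) instance to
  an assumption it discharges, both ends carry the same formula, so without (\<open>\<lambda>\<close>) or (\<open>@\<close>) the
  prefix stays constant and the thread consists of (FIX) instances only. The assumption leaf is
  then the premise of a (FIX) instance, contradicting its depth condition.\<close>

lemma at_append: "at D (a @ b) = (case at D a of None \<Rightarrow> None | Some d \<Rightarrow> at d b)"
proof (induction a arbitrary: D)
  case (Cons i a)
  then show ?case by (cases D) auto
qed simp

lemma at_snocD:
  assumes "at D (r @ [i]) = Some c"
  shows "\<exists>f. at D r = Some f \<and> i < length (prems f) \<and> c = prems f ! i"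
proof -
  obtain f where f: "at D r = Some f" and "at f [i] = Some c"
    using assms by (auto simp: at_append split: option.splits)
  then show ?thesis by (cases f) (auto split: if_splits)
qed

lemma valid_local_ok:
  "valid S D \<Longrightarrow> at D p = Some d \<Longrightarrow> local_ok S (rule_of d) (concl d) (map concl (prems d))"
  unfolding valid_def by blast

lemma valid_fix_ok: "valid S D \<Longrightarrow> at D p = Some d \<Longrightarrow> fix_ok S D p"
  unfolding valid_def by blast

lemma valid_Fix_premise_not_leaf:
  assumes "valid S D" "at D r = Some f" "rule_of f = Fix u" "i < length (prems f)"
  shows "prems (prems f ! i) \<noteq> []"
proof -
  have "map concl (prems f) = [concl f]"
    using valid_local_ok[OF assms(1,2)] assms(3) by simp
  then have "prems f ! i = hd (prems f)"
    using assms(4) by (cases "prems f") auto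
  then show ?thesis
    using valid_fix_ok[OF assms(1,2)] assms(2,3) unfolding fix_ok_def by auto
qed

lemma valid_Del_premise_prefix_less:
  assumes "valid S D" "at D r = Some f" "rule_of f = Del" "i < length (prems f)"
  shows "fst (concl (prems f ! i)) < fst (concl f)"
proof -
  obtain n M c where "map concl (prems f) = [(n, M)]" "concl f = (Suc n, shift c M)"
    using valid_local_ok[OF assms(1,2)] assms(3) by auto
  then show ?thesis
    using assms(4) by (cases "prems f") auto
qed

lemma valid_premise_prefix_le:
  assumes "valid S D" "at D r = Some f" "i < length (prems f)"
    and "rule_of f \<noteq> Lam" "rule_of f \<noteq> Ap"
  shows "fst (concl (prems f ! i)) \<le> fst (concl f)"
proof (cases "rule_of f")
  case Del
  then show ?thesis
    using valid_Del_premise_prefix_less[OF assms(1,2) _ assms(3)] by fastforce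
next
  case (Fix u)
  then have "map concl (prems f) = [concl f]"
    using valid_local_ok[OF assms(1,2)] by simp
  then show ?thesis
    using assms(3) by (cases "prems f") auto
qed (use valid_local_ok[OF assms(1,2)] assms in auto)

lemma valid_thread_prefix_le:
  assumes "valid S D" "at D r = Some f" "at D (r @ s) = Some g"
    and "\<And>s' h. strict_prefix s' s \<Longrightarrow> at D (r @ s') = Some h \<Longrightarrow>
           rule_of h \<noteq> Lam \<and> rule_of h \<noteq> Ap"
  shows "fst (concl g) \<le> fst (concl f)"
  using assms(3,4)
proof (induction s arbitrary: g rule: rev_induct)
  case Nil
  then show ?case using assms(2) by simp
next
  case (snoc i s)
  obtain h where h: "at D (r @ s) = Some h" "i < length (prems h)" "g = prems h ! i"
    using at_snocD[of D "r @ s" i g] snoc.prems(1) by auto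
  have s: "strict_prefix s (s @ [i])"
    by (simp add: strict_prefix_def)
  have "fst (concl h) \<le> fst (concl f)"
    using snoc.IH[OF h(1)] snoc.prems(2) s prefix_order.dual_order.strict_trans by blast
  moreover have "fst (concl g) \<le> fst (concl h)"
    using valid_premise_prefix_le[OF assms(1) h(1,2)] snoc.prems(2)[OF s h(1)] h(3) by blast
  ultimately show ?case by simp
qed

lemma valid_Lam_Ap_free_thread_to_leaf_prefix_less:
  assumes "valid S D" "at D r = Some f" "at D (r @ s @ [i]) = Some e" "prems e = []"
    and Lam_Ap_free: "\<And>s' h. prefix s' s \<Longrightarrow> at D (r @ s') = Some h \<Longrightarrow>
           rule_of h \<noteq> Lam \<and> rule_of h \<noteq> Ap"
  shows "fst (concl e) < fst (concl f)"
proof -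
  obtain g where g: "at D (r @ s) = Some g" "i < length (prems g)" "e = prems g ! i"
    using at_snocD[of D "r @ s" i e] assms(3) by auto
  have "\<forall>u. rule_of g \<noteq> Fix u"
    using valid_Fix_premise_not_leaf[OF assms(1) g(1) _ g(2)] g(3) assms(4) by auto
  then have "rule_of g = Del"
    using valid_local_ok[OF assms(1) g(1)] Lam_Ap_free[OF prefix_order.refl g(1)] g(2)
    by (cases "rule_of g") auto
  then have "fst (concl e) < fst (concl g)"
    using valid_Del_premise_prefix_less[OF assms(1) g(1) _ g(2)] g(3) by simp
  also have "fst (concl g) \<le> fst (concl f)"
    using valid_thread_prefix_le[OF assms(1,2) g(1)] Lam_Ap_free by (meson strict_prefix_def)
  finally show ?thesis .
qed

theorem mainTheorem1:
  fixes S :: sys and D :: deriv and q p :: "nat list"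
  assumes "valid S D"
    and "discharged_at D q p"
  shows "\<exists>r f. strict_prefix q r \<and> strict_prefix r p \<and> at D r = Some f \<and>
           (rule_of f = Lam \<or> rule_of f = Ap)"
proof (rule ccontr)
  assume no_Lam_Ap: "\<not> ?thesis"
  from assms(2) obtain u d e where d: "at D q = Some d" "rule_of d = Fix u"
    and e: "at D p = Some e" "rule_of e = Assm u" and "strict_prefix q p"
    unfolding discharged_at_def by blast
  obtain s i where p: "p = q @ s @ [i]"
    using \<open>strict_prefix q p\<close> by (metis prefix_def strict_prefix_def self_append_conv rev_exhaust)
  have "rule_of h \<noteq> Lam \<and> rule_of h \<noteq> Ap"
    if "prefix s' s" "at D (q @ s') = Some h" for s' h
  proof (cases "s' = []")
    case False
    then have "strict_prefix q (q @ s') \<and> strict_prefix (q @ s') p"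
      using that(1) p by (auto simp: strict_prefix_def prefix_def)
    then show ?thesis using no_Lam_Ap that(2) by blast
  qed (use that d in simp)
  moreover have "prems e = []"
    using valid_local_ok[OF assms(1) e(1)] e(2) by simp
  ultimately have "fst (concl e) < fst (concl d)"
    using valid_Lam_Ap_free_thread_to_leaf_prefix_less[OF assms(1) d(1)] e(1) p by blast
  moreover have "concl e = concl d"
    using valid_fix_ok[OF assms(1) d(1)] assms(2) e(1) d unfolding fix_ok_def by blast
  ultimately show False by simp
qed

end
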